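(* Let $p\ge1$ and $T\in\mathbb{N}$. The equispaced configuration $\mathbf{X}^{\mathrm{eq}}=\mathbb{Z}$ is, up to translations, the unique minimiser of $\mathcal{F}^0_p$ in $\mathbb{X}_T$.
   Context: One-dimensional setting. Let $T\in\mathbb{N}$. A configuration is a set $\mathbf{X}=\bigcup_{k\in\mathbb{Z}}(\bar{\mathbf{X}}+kT)$ with $\bar{\mathbf{X}}=(x_1,\dots,x_T)\in[0,T)^T$, $x_i\le x_j$ for $i<j$ (points counted with multiplicity); $\mathbb{X}_T$ is the set of configurations. Translations: $\mathbf{X}+a=\{x+a:x\in\mathbf{X}\}$. For $\mathbf{X}\in\mathbb{X}_T$, $u[\mathbf{X}]$ is the $T$-periodic function (defined up to an additive constant) with distributional derivative $\mathrm{D}u[\mathbf{X}]=\mathcal{L}^1-\sum_{x\in\mathbf{X}}\delta_x$ (multiplicities counted). $\mathcal{F}^0_p[\mathbf{X}]=\int_0^T\int_0^T|u[\mathbf{X}](x)-u[\mathbf{X}](y)|^p\,\mathrm{d}y\,\mathrm{d}x$. *)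

theory Defs
  imports "HOL-Analysis.Analysis"
begin

text \<open>A configuration in X_T is encoded by its representatives
  x 0 \<le> x 1 \<le> ... \<le> x (T-1) in [0,T); the configuration itself is
  the multiset of points x i + k T (i < T, k integer).\<close>

definition is_config :: "nat \<Rightarrow> (nat \<Rightarrow> real) \<Rightarrow> bool" where
  "is_config T x \<longleftrightarrow> (\<forall>i<T. 0 \<le> x i \<and> x i < real T) \<and>
     (\<forall>i j. i \<le> j \<and> j < T \<longrightarrow> x i \<le> x j)"

definition conf_count :: "nat \<Rightarrow> (nat \<Rightarrow> real) \<Rightarrow> real \<Rightarrow> nat" where
  "conf_count T x y = card {(i::nat, k::int). i < T \<and> x i + of_int k * real T = y}"

definition conf_translate_eq :: "nat \<Rightarrow> (nat \<Rightarrow> real) \<Rightarrow> (nat \<Rightarrow> real) \<Rightarrow> real \<Rightarrow> bool" where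
  "conf_translate_eq T x z a \<longleftrightarrow> (\<forall>y. conf_count T x y = conf_count T z (y - a))"

definition eq_config :: "nat \<Rightarrow> real" where
  "eq_config i = real i"

text \<open>u[X]: T-periodic, with distributional derivative Lebesgue minus the sum of
  Dirac masses at the points of X (with multiplicity); fixed up to an additive
  constant, which does not affect the energy.\<close>
definition u_conf :: "nat \<Rightarrow> (nat \<Rightarrow> real) \<Rightarrow> real \<Rightarrow> real" where
  "u_conf T x t = t - (\<Sum>i<T. of_int \<lfloor>(t - x i) / real T\<rfloor>)"

definition F0 :: "real \<Rightarrow> nat \<Rightarrow> (nat \<Rightarrow> real) \<Rightarrow> real" where
  "F0 p T x = (LBINT s=0..real T. (LBINT t=0..real T. \<bar>u_conf T x s - u_conf T x t\<bar> powr p))"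

end

theory Submission
  imports Defs
begin

text \<open>Write \<open>N(s,h)\<close> for the number of points in \<open>(s, s + h]\<close>. Then
  \<open>u(s + h) - u(s) = h - N(s,h)\<close>, so by periodicity the energy is
  \<open>\<integral>\<^sub>0\<^sup>T \<integral>\<^sub>0\<^sup>T \<bar>h - N(s,h)\<bar>\<^sup>p dh ds\<close>. As \<open>n \<mapsto> \<bar>h - n\<bar>\<^sup>p\<close> is convex, on the integers it
  dominates its secant through \<open>\<lfloor>h\<rfloor>\<close> and \<open>\<lfloor>h\<rfloor> + 1\<close>; the secant is affine in \<open>N\<close>, and the
  \<open>s\<close>-average of \<open>N(s,h)\<close> does not depend on the configuration. This gives a lower bound
  independent of the configuration, attained iff \<open>N(s,h) \<in> {\<lfloor>h\<rfloor>, \<lfloor>h\<rfloor> + 1}\<close> for all \<open>s, h\<close>,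
  which holds for translates of \<open>\<int>\<close> by Hermite's identity. Any other configuration has two
  points at distance less than 1, and then \<open>N(s,h) \<ge> 2\<close> with \<open>h < 1\<close> on a rectangle of
  positive measure, where the secant falls short by at least \<open>1/2\<close>.\<close>

lemma convex_on_powr_nonneg:
  assumes "(p::real) \<ge> 1"
  shows "convex_on {0..} (\<lambda>x::real. x powr p)"
proof (rule convex_onI)
  have scale: "(c * z) powr p \<le> c * z powr p" if "0 \<le> c" "c \<le> 1" "0 \<le> z" for c z :: real
  proof -
    have "c powr p \<le> c powr 1" using that assms by (intro powr_mono') auto
    then show ?thesis using that by (simp add: powr_mult mult_right_mono)
  qed
  fix t x y :: real
  assume t: "0 < t" "t < 1" and xy: "x \<in> {0..}" "y \<in> {0..}"
  show "((1 - t) *\<^sub>R x + t *\<^sub>R y) powr p \<le> (1 - t) * x powr p + t * y powr p"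
  proof (cases "x = 0 \<or> y = 0")
    case True
    then show ?thesis using scale[of t y] scale[of "1 - t" x] t xy assms by auto
  next
    case False
    then show ?thesis using convex_onD[OF powr_convex[OF assms], of t x y] t xy by simp
  qed
qed simp

lemma convex_on_mono_comp:
  fixes f :: "'a::real_vector \<Rightarrow> real"
  assumes f: "convex_on S f" and g: "convex_on U g" "mono_on U g" and fS: "f ` S \<subseteq> U"
  shows "convex_on S (\<lambda>x. g (f x))"
proof (rule convex_onI)
  show "convex S" using f by (rule convex_on_imp_convex)
  fix t :: real and x y assume t: "0 < t" "t < 1" and xy: "x \<in> S" "y \<in> S"
  have "(1 - t) * f x + t * f y \<in> U"
    using convexD[OF convex_on_imp_convex[OF g(1)], of "f x" "f y" "1 - t" t] fS xy t by auto
  moreover have "(1 - t) *\<^sub>R x + t *\<^sub>R y \<in> S"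
    using convexD[OF convex_on_imp_convex[OF f], of x y "1 - t" t] xy t by auto
  ultimately have "g (f ((1 - t) *\<^sub>R x + t *\<^sub>R y)) \<le> g ((1 - t) * f x + t * f y)"
    using fS convex_onD[OF f, of t x y] xy t by (intro mono_onD[OF g(2)]) auto
  also have "\<dots> \<le> (1 - t) * g (f x) + t * g (f y)"
    using convex_onD[OF g(1), of t "f x" "f y"] fS xy t by auto
  finally show "g (f ((1 - t) *\<^sub>R x + t *\<^sub>R y)) \<le> (1 - t) * g (f x) + t * g (f y)" .
qed

lemma convex_on_abs_diff_powr:
  assumes "(p::real) \<ge> 1"
  shows "convex_on UNIV (\<lambda>y::real. \<bar>y - a\<bar> powr p)"
proof -
  have "convex_on UNIV (\<lambda>y::real. dist a y)" by (rule convex_on_dist) simp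
  moreover have "mono_on {0..} (\<lambda>z::real. z powr p)"
    using assms by (auto intro!: mono_onI powr_mono2)
  ultimately show ?thesis
    using convex_on_mono_comp[OF _ convex_on_powr_nonneg[OF assms]]
    by (force simp: dist_real_def abs_minus_commute)
qed

lemma convex_on_secant_le_outside:
  fixes f :: "real \<Rightarrow> real"
  assumes f: "convex_on I f" and I: "a \<in> I" "b \<in> I" "y \<in> I"
    and "a < b" and y: "y \<le> a \<or> b \<le> y"
  shows "f a + (f b - f a) / (b - a) * (y - a) \<le> f y"
proof -
  consider "y < a" | "y = a" | "y = b" | "b < y" using y by linarith
  then show ?thesis
  proof cases
    case 1
    have "(f y - f a) / (y - a) \<le> (f a - f b) / (a - b)"
      using convex_on_slope_le[OF f I(3,2) 1 \<open>a < b\<close>] by linarith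
    then show ?thesis using 1 \<open>a < b\<close> by (simp add: divide_simps) (simp add: algebra_simps)
  next
    case 4
    have "(f a - f b) / (a - b) \<le> (f a - f y) / (a - y)"
      using convex_on_slope_le(1)[OF f I(1,3) \<open>a < b\<close> 4] .
    then show ?thesis using 4 \<open>a < b\<close> by (simp add: divide_simps) (simp add: algebra_simps)
  qed simp_all
qed

definition secant_slope :: "real \<Rightarrow> real \<Rightarrow> real" where
  "secant_slope p h = (1 - frac h) powr p - frac h powr p"

definition secant :: "real \<Rightarrow> real \<Rightarrow> real \<Rightarrow> real" where
  "secant p h y = frac h powr p + secant_slope p h * (y - of_int \<lfloor>h\<rfloor>)"

lemma secant_affine: "secant p h y = secant p h 0 + secant_slope p h * y"
  unfolding secant_def by (simp add: algebra_simps)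

lemma frac_powr_le_1:
  fixes p h :: real
  assumes "p \<ge> 1" shows "frac h powr p \<le> 1" "(1 - frac h) powr p \<le> 1"
proof -
  have "0 \<le> frac h" "frac h < 1" "0 < p" using assms by (simp_all add: frac_lt_1)
  then show "frac h powr p \<le> 1" "(1 - frac h) powr p \<le> 1"
    using powr_le1[of p "frac h"] powr_le1[of p "1 - frac h"] by auto
qed

lemma abs_secant_slope_le_1: "p \<ge> 1 \<Longrightarrow> \<bar>secant_slope p h\<bar> \<le> 1"
  using frac_powr_le_1[of p h] powr_ge_zero[of "frac h" p] powr_ge_zero[of "1 - frac h" p]
  unfolding secant_slope_def by linarith

lemma secant_le_abs_diff_powr:
  assumes "p \<ge> 1"
  shows "secant p h (of_int n) \<le> \<bar>h - of_int n\<bar> powr p"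
proof -
  define f where "f y = \<bar>y - h\<bar> powr p" for y
  define a where "a = real_of_int \<lfloor>h\<rfloor>"
  have "\<bar>a - h\<bar> = frac h" "\<bar>a + 1 - h\<bar> = 1 - frac h"
    using frac_lt_1[of h] by (simp_all add: a_def frac_def)
  then have fa: "f a = frac h powr p" and fb: "f (a + 1) = (1 - frac h) powr p"
    unfolding f_def by simp_all
  have "n \<le> \<lfloor>h\<rfloor> \<or> \<lfloor>h\<rfloor> + 1 \<le> n" by linarith
  then have "of_int n \<le> a \<or> a + 1 \<le> of_int n" unfolding a_def by linarith
  then have "f a + (f (a + 1) - f a) / (a + 1 - a) * (of_int n - a) \<le> f (of_int n)"
    unfolding f_def by (intro convex_on_secant_le_outside[OF convex_on_abs_diff_powr[OF assms]]) auto
  then show ?thesis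
    unfolding fa fb secant_def secant_slope_def by (simp add: f_def a_def abs_minus_commute)
qed

lemma secant_eq_abs_diff_powr:
  assumes "n = \<lfloor>h\<rfloor> \<or> n = \<lfloor>h\<rfloor> + 1"
  shows "secant p h (of_int n) = \<bar>h - of_int n\<bar> powr p"
  using assms frac_lt_1[of h] unfolding secant_def secant_slope_def
  by (auto simp: frac_def algebra_simps)

lemma secant_add_half_le_abs_diff_powr:
  assumes p: "p \<ge> 1" and h: "3/4 \<le> h" "h < 1" and n: "2 \<le> n"
  shows "secant p h (of_int n) + 1/2 \<le> \<bar>h - of_int n\<bar> powr p"
proof -
  have h_frac: "\<lfloor>h\<rfloor> = 0" "frac h = h" using h by (simp_all add: floor_eq_iff frac_def)
  have slope: "secant_slope p h \<le> 0"
    unfolding secant_slope_def h_frac using h p by (simp add: powr_mono2)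
  have "secant p h (of_int n) \<le> h powr p + 2 * secant_slope p h"
    unfolding secant_def h_frac using mult_left_mono_neg[of 2 "of_int n" "secant_slope p h"] slope n
    by (simp add: mult.commute)
  also have "\<dots> \<le> 2 * (1 - h)"
  proof -
    have "(1 - h) powr p \<le> 1 - h" using h p powr_mono'[of 1 p "1 - h"] by simp
    then show ?thesis using powr_ge_zero[of h p] unfolding secant_slope_def h_frac by argo
  qed
  also have "\<dots> \<le> 1/2" using h by simp
  finally have "secant p h (of_int n) \<le> 1/2" .
  moreover have "1 \<le> (of_int n - h) powr p" using h n p by (intro ge_one_powr_ge_zero) auto
  ultimately show ?thesis using h n by simp
qed

lemma set_integrable_bounded_measurable:
  fixes f :: "real \<Rightarrow> real"
  assumes [measurable]: "f \<in> borel_measurable borel" and "\<And>x. x \<in> {a..b} \<Longrightarrow> \<bar>f x\<bar> \<le> B"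
  shows "set_integrable lborel {a..b} f"
  unfolding set_integrable_def
  by (rule integrableI_bounded_set_indicator[where B=B]) (auto simp: assms(2) emeasure_lborel_Icc_eq)

lemma integrable_on_bounded_measurable:
  fixes f :: "real \<Rightarrow> real"
  assumes "f \<in> borel_measurable borel" and "\<And>x. x \<in> {a..b} \<Longrightarrow> \<bar>f x\<bar> \<le> B"
  shows "f integrable_on {a..b}"
  using set_borel_integral_eq_integral(1)[OF set_integrable_bounded_measurable[OF assms]] .

lemma interval_integral_bounded_measurable:
  fixes f :: "real \<Rightarrow> real"
  assumes "f \<in> borel_measurable borel" and "\<And>x. x \<in> {0..b} \<Longrightarrow> \<bar>f x\<bar> \<le> B" and "0 \<le> b"
  shows "(LBINT x=0..b. f x) = integral {0..b} f"
  using interval_integral_eq_integral[OF assms(3) set_integrable_bounded_measurable[OF assms(1,2)]]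
  by (simp add: zero_ereal_def)

lemma abs_integral_le_bound:
  fixes f :: "real \<Rightarrow> real"
  assumes "f integrable_on {a..b}" "a \<le> b" "\<And>x. x \<in> {a..b} \<Longrightarrow> \<bar>f x\<bar> \<le> B"
  shows "\<bar>integral {a..b} f\<bar> \<le> B * (b - a)"
proof -
  have "0 \<le> B" using assms(2) assms(3)[of a] by auto
  then show ?thesis using integrable_bound[of B f a b] assms by simp
qed

lemma integral_ge_on_subinterval:
  fixes f :: "real \<Rightarrow> real"
  assumes f: "f integrable_on {a..b}" and nonneg: "\<And>x. x \<in> {a..b} \<Longrightarrow> 0 \<le> f x"
    and sub: "a \<le> c" "c \<le> d" "d \<le> b" and ge: "\<And>x. x \<in> {c..d} \<Longrightarrow> m \<le> f x"
  shows "m * (d - c) \<le> integral {a..b} f"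
proof -
  have int: "f integrable_on {u..v}" if "a \<le> u" "v \<le> b" for u v
    using integrable_subinterval_real[OF f] that by simp
  have "integral {a..b} f = integral {a..c} f + integral {c..d} f + integral {d..b} f"
    using sub int by (simp add: Henstock_Kurzweil_Integration.integral_combine)
  moreover have "0 \<le> integral {a..c} f" "0 \<le> integral {d..b} f"
    using sub by (auto intro!: integral_nonneg int nonneg)
  moreover have "m * (d - c) \<le> integral {c..d} f"
    using integral_component_lbound_real[of f c d m 1] sub ge int by auto
  ultimately show ?thesis by linarith
qed

lemma integral_periodic_shift:
  fixes f :: "real \<Rightarrow> real"
  assumes T: "T > 0" and per: "\<And>x. f (x + T) = f x" and int: "\<And>a b. f integrable_on {a..b}"
  shows "integral {c..c + T} f = integral {0..T} f"
proof -
  interpret periodic_fun_simple f T by standard (rule per)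
  define k where "k = \<lfloor>c / T\<rfloor>"
  define c' where "c' = c - of_int k * T"
  have "of_int k * T \<le> c" "c < (of_int k + 1) * T"
    using T floor_divide_lower[OF T, of c] floor_divide_upper[OF T, of c] by (simp_all add: k_def)
  then have c': "0 \<le> c'" "c' \<le> T" by (simp_all add: c'_def algebra_simps)
  have "integral {c..c + T} f = integral {c'..c' + T} (f \<circ> (+) (of_int k * T))"
    by (simp add: integral_shift_Icc_real c'_def)
  also have "f \<circ> (+) (of_int k * T) = f"
    using plus_of_int by (auto simp: add.commute)
  also have "integral {c'..c' + T} f = integral {c'..T} f + integral {T..c' + T} f"
    using c' int by (simp add: Henstock_Kurzweil_Integration.integral_combine)
  also have "integral {T..c' + T} f = integral {0..c'} (f \<circ> (+) T)"
    by (simp add: integral_shift_Icc_real)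
  also have "f \<circ> (+) T = f" using per by (auto simp: add.commute)
  also have "integral {c'..T} f + integral {0..c'} f = integral {0..T} f"
    using Henstock_Kurzweil_Integration.integral_combine[OF c' int] by linarith
  finally show ?thesis .
qed

lemma integral_periodic_translate:
  fixes f :: "real \<Rightarrow> real"
  assumes "T > 0" and "\<And>x. f (x + T) = f x" and "\<And>a b. f integrable_on {a..b}"
  shows "integral {0..T} (\<lambda>t. f (t + c)) = integral {0..T} f"
proof -
  have "integral {0..T} (\<lambda>t. f (t + c)) = integral {c..c + T} f"
    using integral_shift_Icc_real[of 0 T f c] by (simp add: o_def add.commute)
  then show ?thesis using integral_periodic_shift[OF assms] by simp
qed

text \<open>\<open>multiples_count T r h\<close> is the number of multiples of \<open>T\<close> in \<open>(r, r + h]\<close>, hence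
  \<open>window_count T x s h\<close> is the number of points of the configuration in \<open>(s, s + h]\<close>.\<close>

definition multiples_count :: "nat \<Rightarrow> real \<Rightarrow> real \<Rightarrow> int" where
  "multiples_count T r h = \<lfloor>(r + h) / real T\<rfloor> - \<lfloor>r / real T\<rfloor>"

definition window_count :: "nat \<Rightarrow> (nat \<Rightarrow> real) \<Rightarrow> real \<Rightarrow> real \<Rightarrow> int" where
  "window_count T x s h = (\<Sum>i<T. multiples_count T (s - x i) h)"

lemma u_conf_add: "u_conf T x (s + h) = u_conf T x s + h - of_int (window_count T x s h)"
  unfolding u_conf_def window_count_def multiples_count_def
  by (simp add: sum_subtractf algebra_simps)

lemma u_conf_periodic:
  assumes "T \<ge> 1" shows "u_conf T x (t + real T) = u_conf T x t"
proof -
  have "(t + real T - x i) / real T = (t - x i) / real T + 1" for i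
    using assms by (simp add: field_simps)
  then show ?thesis unfolding u_conf_def by (simp add: sum.distrib)
qed

lemma abs_u_conf_diff_le:
  assumes "T \<ge> 1" shows "\<bar>u_conf T x s - u_conf T x t\<bar> \<le> real T"
proof -
  define c where "c = (\<Sum>i<T. x i) / real T"
  have "c \<le> u_conf T x t \<and> u_conf T x t \<le> c + real T" for t
  proof -
    have mean: "(\<Sum>i<T. (t - x i) / real T) = t - c"
      using assms by (simp add: c_def sum_subtractf sum_divide_distrib[symmetric] diff_divide_distrib)
    have "(\<Sum>i<T. of_int \<lfloor>(t - x i) / real T\<rfloor>) \<le> (\<Sum>i<T. (t - x i) / real T)"
      by (intro sum_mono) simp
    moreover have "(\<Sum>i<T. (t - x i) / real T - 1) \<le> (\<Sum>i<T. of_int \<lfloor>(t - x i) / real T\<rfloor>)"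
      by (intro sum_mono) linarith
    ultimately show ?thesis using mean unfolding u_conf_def by (simp add: sum_subtractf)
  qed
  from this[of s] this[of t] show ?thesis by linarith
qed

lemma multiples_count_periodic:
  assumes "T \<ge> 1" shows "multiples_count T (r + real T) h = multiples_count T r h"
proof -
  have "(r + real T + h) / real T = (r + h) / real T + 1" "(r + real T) / real T = r / real T + 1"
    using assms by (simp_all add: field_simps)
  then show ?thesis unfolding multiples_count_def by simp
qed

lemma multiples_count_bounds:
  assumes "T \<ge> 1" "0 \<le> h" "h \<le> real T"
  shows "0 \<le> multiples_count T r h" "multiples_count T r h \<le> 1"
proof -
  have "0 \<le> h / real T" "h / real T \<le> 1" using assms by simp_all
  moreover have "(r + h) / real T = r / real T + h / real T" by (simp add: add_divide_distrib)
  ultimately have "r / real T \<le> (r + h) / real T" "(r + h) / real T \<le> r / real T + 1"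
    by simp_all
  then have "\<lfloor>r / real T\<rfloor> \<le> \<lfloor>(r + h) / real T\<rfloor>"
    "\<lfloor>(r + h) / real T\<rfloor> \<le> \<lfloor>r / real T + 1\<rfloor>"
    by (simp_all only: floor_mono)
  then show "0 \<le> multiples_count T r h" "multiples_count T r h \<le> 1"
    unfolding multiples_count_def by simp_all
qed

lemma multiples_count_pos:
  assumes "T \<ge> 1" "s < y + of_int k * real T" "y + of_int k * real T \<le> s + h"
  shows "1 \<le> multiples_count T (s - y) h"
proof -
  have "(s - y) / real T < of_int k" "of_int k \<le> (s - y + h) / real T"
    using assms by (simp_all add: divide_less_eq le_divide_eq algebra_simps)
  then have "\<lfloor>(s - y) / real T\<rfloor> < k" "k \<le> \<lfloor>(s - y + h) / real T\<rfloor>"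
    by (simp_all add: floor_less_iff le_floor_iff)
  then show ?thesis unfolding multiples_count_def by simp
qed

lemma window_count_periodic:
  "T \<ge> 1 \<Longrightarrow> window_count T x (s + real T) h = window_count T x s h"
  unfolding window_count_def using multiples_count_periodic[of T "s - x _" h]
  by (simp add: algebra_simps)

lemma window_count_bounds:
  assumes "T \<ge> 1" "0 \<le> h" "h \<le> real T"
  shows "0 \<le> window_count T x s h" "window_count T x s h \<le> int T"
proof -
  have "(\<Sum>i<T. multiples_count T (s - x i) h) \<le> (\<Sum>i<T. 1)"
    by (intro sum_mono multiples_count_bounds[OF assms])
  then show "window_count T x s h \<le> int T" unfolding window_count_def by simp
  show "0 \<le> window_count T x s h"
    unfolding window_count_def by (intro sum_nonneg multiples_count_bounds[OF assms])
qed

lemma window_count_ge_2: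
  assumes T: "T \<ge> 1" and h: "0 \<le> h" "h \<le> real T" and ij: "i < T" "j < T" "i \<noteq> j"
    and yi: "s < x i + of_int ki * real T" "x i + of_int ki * real T \<le> s + h"
    and yj: "s < x j + of_int kj * real T" "x j + of_int kj * real T \<le> s + h"
  shows "2 \<le> window_count T x s h"
proof -
  have "2 \<le> (\<Sum>l\<in>{i, j}. multiples_count T (s - x l) h)"
    using multiples_count_pos[OF T yi] multiples_count_pos[OF T yj] ij by simp
  also have "\<dots> \<le> window_count T x s h"
    unfolding window_count_def using ij
    by (intro sum_mono2 multiples_count_bounds[OF T h]) auto
  finally show ?thesis .
qed

text \<open>Lebesgue integrals, so that the dependence on \<open>s\<close> and \<open>r\<close> is measurable.\<close>

definition inner_energy :: "real \<Rightarrow> nat \<Rightarrow> (nat \<Rightarrow> real) \<Rightarrow> real \<Rightarrow> real" where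
  "inner_energy p T x s = (LBINT t=0..real T. \<bar>u_conf T x s - u_conf T x t\<bar> powr p)"

definition secant_energy :: "real \<Rightarrow> nat \<Rightarrow> (nat \<Rightarrow> real) \<Rightarrow> real \<Rightarrow> real" where
  "secant_energy p T x s = (LBINT h=0..real T. secant p h (of_int (window_count T x s h)))"

definition slope_profile :: "real \<Rightarrow> nat \<Rightarrow> real \<Rightarrow> real" where
  "slope_profile p T r = (LBINT h=0..real T. secant_slope p h * of_int (multiples_count T r h))"

definition energy_lower_bound :: "real \<Rightarrow> nat \<Rightarrow> real" where
  "energy_lower_bound p T =
     real T * integral {0..real T} (\<lambda>h. secant p h 0) + real T * integral {0..real T} (slope_profile p T)"

lemma borel_measurable_u_conf[measurable]:
  "(\<lambda>t. u_conf T x (f t)) \<in> borel_measurable M" if [measurable]: "f \<in> borel_measurable M"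
  unfolding u_conf_def by measurable

lemma borel_measurable_inner_energy[measurable]: "inner_energy p T x \<in> borel_measurable borel"
  unfolding inner_energy_def interval_lebesgue_integral_def set_lebesgue_integral_def
  by measurable

lemma borel_measurable_secant_energy[measurable]: "secant_energy p T x \<in> borel_measurable borel"
  unfolding secant_energy_def interval_lebesgue_integral_def set_lebesgue_integral_def
    secant_def secant_slope_def window_count_def multiples_count_def frac_def of_int_sum of_int_diff
  by measurable

lemma borel_measurable_slope_profile[measurable]: "slope_profile p T \<in> borel_measurable borel"
  unfolding slope_profile_def interval_lebesgue_integral_def set_lebesgue_integral_def
    secant_slope_def multiples_count_def frac_def of_int_diff
  by measurable

context
  fixes p :: real and T :: nat
  assumes p: "p \<ge> 1" and T: "T \<ge> 1"
begin

lemma abs_inner_integrand_le: "\<bar>\<bar>u_conf T x s - u_conf T x t\<bar> powr p\<bar> \<le> real T powr p"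
  using abs_u_conf_diff_le[OF T, of x s t] p by (simp add: powr_mono2)

lemma inner_energy_eq_integral:
  "inner_energy p T x s = integral {0..real T} (\<lambda>t. \<bar>u_conf T x s - u_conf T x t\<bar> powr p)"
  unfolding inner_energy_def
  by (rule interval_integral_bounded_measurable[OF _ abs_inner_integrand_le]) auto

lemma inner_integrand_integrable:
  "(\<lambda>t. \<bar>u_conf T x s - u_conf T x t\<bar> powr p) integrable_on {a..b}"
  by (rule integrable_on_bounded_measurable[OF _ abs_inner_integrand_le]) measurable

lemma window_integrand_integrable:
  "(\<lambda>h. \<bar>h - of_int (window_count T x s h)\<bar> powr p) integrable_on {0..real T}"
proof -
  have "(\<lambda>h. \<bar>h - of_int (window_count T x s h)\<bar> powr p)
      = (\<lambda>h. \<bar>u_conf T x s - u_conf T x (s + h)\<bar> powr p)"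
    by (simp add: u_conf_add abs_minus_commute)
  then show ?thesis
    by (simp add: integrable_on_bounded_measurable[OF _ abs_inner_integrand_le])
qed

lemma inner_energy_eq_window_integral:
  "inner_energy p T x s = integral {0..real T} (\<lambda>h. \<bar>h - of_int (window_count T x s h)\<bar> powr p)"
proof -
  have "inner_energy p T x s = integral {0..real T} (\<lambda>h. \<bar>u_conf T x s - u_conf T x (h + s)\<bar> powr p)"
    unfolding inner_energy_eq_integral
    by (rule integral_periodic_translate[symmetric])
      (use T in \<open>simp_all add: u_conf_periodic inner_integrand_integrable\<close>)
  moreover have "u_conf T x (h + s) = u_conf T x s + h - of_int (window_count T x s h)" for h
    using u_conf_add[of T x s h] by (simp add: add.commute)
  ultimately show ?thesis by (simp add: abs_minus_commute)
qed

lemma abs_inner_energy_le: "\<bar>inner_energy p T x s\<bar> \<le> real T powr p * real T"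
  unfolding inner_energy_eq_integral
  using abs_integral_le_bound[OF inner_integrand_integrable _ abs_inner_integrand_le, of 0 "real T"] by simp

lemma F0_eq_integral_inner_energy: "F0 p T x = integral {0..real T} (inner_energy p T x)"
  unfolding F0_def inner_energy_def[symmetric]
  by (rule interval_integral_bounded_measurable[OF _ abs_inner_energy_le]) auto

lemma abs_secant_le:
  assumes "h \<in> {0..real T}" "y \<in> {0..real T}"
  shows "\<bar>secant p h y\<bar> \<le> real T + 1"
proof -
  have "(0::real) \<le> of_int \<lfloor>h\<rfloor>" "of_int \<lfloor>h\<rfloor> \<le> real T"
    using assms of_int_floor_le[of h] by (auto simp del: of_int_floor_le)
  then have "\<bar>y - of_int \<lfloor>h\<rfloor>\<bar> \<le> real T" using assms unfolding atLeastAtMost_iff abs_le_iff by linarith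
  then have "\<bar>secant_slope p h * (y - of_int \<lfloor>h\<rfloor>)\<bar> \<le> 1 * real T"
    unfolding abs_mult using abs_secant_slope_le_1[OF p] by (intro mult_mono) auto
  then show ?thesis
    unfolding secant_def using frac_powr_le_1(1)[OF p, of h] powr_ge_zero[of "frac h" p] by argo
qed

lemma abs_secant_window_le:
  "h \<in> {0..real T} \<Longrightarrow> \<bar>secant p h (of_int (window_count T x s h))\<bar> \<le> real T + 1"
  using abs_secant_le window_count_bounds[OF T, of h x s] by simp

lemma borel_measurable_secant_window: "(\<lambda>h. secant p h (of_int (window_count T x s h))) \<in> borel_measurable borel"
  unfolding secant_def secant_slope_def window_count_def multiples_count_def frac_def of_int_sum of_int_diff
  by measurable

lemma secant_window_integrable:
  "(\<lambda>h. secant p h (of_int (window_count T x s h))) integrable_on {0..real T}"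
  by (rule integrable_on_bounded_measurable[OF borel_measurable_secant_window abs_secant_window_le])

lemma secant_energy_eq_integral:
  "secant_energy p T x s = integral {0..real T} (\<lambda>h. secant p h (of_int (window_count T x s h)))"
  unfolding secant_energy_def
  by (rule interval_integral_bounded_measurable[OF borel_measurable_secant_window abs_secant_window_le]) auto

lemma abs_secant_energy_le: "\<bar>secant_energy p T x s\<bar> \<le> (real T + 1) * real T"
  unfolding secant_energy_eq_integral
  using abs_integral_le_bound[OF secant_window_integrable _ abs_secant_window_le] by simp

lemma secant_energy_le_inner_energy: "secant_energy p T x s \<le> inner_energy p T x s"
  unfolding secant_energy_eq_integral inner_energy_eq_window_integral
  by (intro integral_le secant_window_integrable window_integrand_integrable secant_le_abs_diff_powr p)

lemma borel_measurable_slope_integrand: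
  "(\<lambda>h. secant_slope p h * of_int (multiples_count T r h)) \<in> borel_measurable borel"
  unfolding secant_slope_def multiples_count_def frac_def of_int_diff by measurable

lemma abs_slope_integrand_le:
  assumes "h \<in> {0..real T}"
  shows "\<bar>secant_slope p h * of_int (multiples_count T r h)\<bar> \<le> 1"
proof -
  have "\<bar>secant_slope p h\<bar> * \<bar>of_int (multiples_count T r h)\<bar> \<le> 1 * 1"
    using abs_secant_slope_le_1[OF p, of h] multiples_count_bounds[OF T, of h r] assms
    by (intro mult_mono) auto
  then show ?thesis by (simp add: abs_mult)
qed

lemma slope_integrand_integrable:
  "(\<lambda>h. secant_slope p h * of_int (multiples_count T r h)) integrable_on {0..real T}"
  by (rule integrable_on_bounded_measurable[OF borel_measurable_slope_integrand abs_slope_integrand_le])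

lemma slope_profile_eq_integral:
  "slope_profile p T r = integral {0..real T} (\<lambda>h. secant_slope p h * of_int (multiples_count T r h))"
  unfolding slope_profile_def
  by (rule interval_integral_bounded_measurable[OF borel_measurable_slope_integrand abs_slope_integrand_le]) auto

lemma slope_profile_integrable: "slope_profile p T integrable_on {a..b}"
proof (rule integrable_on_bounded_measurable[OF borel_measurable_slope_profile])
  show "\<bar>slope_profile p T r\<bar> \<le> real T" for r
    unfolding slope_profile_eq_integral
    using abs_integral_le_bound[OF slope_integrand_integrable _ abs_slope_integrand_le] by simp
qed

lemma secant_energy_decomp:
  "secant_energy p T x s = integral {0..real T} (\<lambda>h. secant p h 0) + (\<Sum>i<T. slope_profile p T (s - x i))"
proof -
  have "(\<lambda>h. secant p h 0) \<in> borel_measurable borel"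
    unfolding secant_def secant_slope_def frac_def by measurable
  then have secant_0_integrable: "(\<lambda>h. secant p h 0) integrable_on {0..real T}"
    by (rule integrable_on_bounded_measurable[where B="real T + 1"]) (simp add: abs_secant_le)
  have "secant p h (of_int (window_count T x s h))
      = secant p h 0 + (\<Sum>i<T. secant_slope p h * of_int (multiples_count T (s - x i) h))" for h
    by (subst secant_affine) (simp add: window_count_def sum_distrib_left)
  then show ?thesis
    unfolding secant_energy_eq_integral slope_profile_eq_integral using secant_0_integrable
    by (simp add: integral_add integral_sum integrable_sum slope_integrand_integrable)
qed

lemma integral_secant_energy: "integral {0..real T} (secant_energy p T x) = energy_lower_bound p T"
proof -
  have shift: "integral {0..real T} (\<lambda>s. slope_profile p T (s - x i)) = integral {0..real T} (slope_profile p T)" for i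
    using integral_periodic_translate[of "real T" "slope_profile p T" "- x i"] T
    by (simp add: slope_profile_integrable slope_profile_def multiples_count_periodic)
  have int: "(\<lambda>s. slope_profile p T (s - x i)) integrable_on {0..real T}" for i
    using integrable_on_shift_Icc_real[of "slope_profile p T" "- x i" 0 "real T"]
    by (simp add: o_def slope_profile_integrable)
  have "integral {0..real T} (secant_energy p T x)
      = real T * integral {0..real T} (\<lambda>h. secant p h 0)
        + (\<Sum>i<T. integral {0..real T} (\<lambda>s. slope_profile p T (s - x i)))"
    unfolding secant_energy_decomp
    by (subst integral_add) (auto intro!: integrable_sum int simp: integral_sum[OF _ int])
  then show ?thesis unfolding shift energy_lower_bound_def by simp
qed

lemma inner_energy_integrable: "inner_energy p T x integrable_on {a..b}"
  by (rule integrable_on_bounded_measurable[OF borel_measurable_inner_energy abs_inner_energy_le])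

lemma secant_energy_integrable: "secant_energy p T x integrable_on {a..b}"
  by (rule integrable_on_bounded_measurable[OF borel_measurable_secant_energy abs_secant_energy_le])

lemma energy_lower_bound_le_F0: "energy_lower_bound p T \<le> F0 p T x"
  unfolding F0_eq_integral_inner_energy integral_secant_energy[symmetric, of x]
  by (intro integral_le secant_energy_le_inner_energy secant_energy_integrable inner_energy_integrable)

lemma F0_eq_lower_bound:
  assumes "\<And>s h. window_count T x s h = \<lfloor>h\<rfloor> \<or> window_count T x s h = \<lfloor>h\<rfloor> + 1"
  shows "F0 p T x = energy_lower_bound p T"
proof -
  have "secant_energy p T x = inner_energy p T x"
    unfolding fun_eq_iff secant_energy_eq_integral inner_energy_eq_window_integral
    by (intro allI integral_cong secant_eq_abs_diff_powr assms)
  then show ?thesis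
    unfolding F0_eq_integral_inner_energy integral_secant_energy[symmetric, of x] by simp
qed

lemma secant_energy_add_le_inner_energy:
  assumes ab: "3/4 \<le> a" "a \<le> b" "b < 1" and two: "\<And>h. h \<in> {a..b} \<Longrightarrow> 2 \<le> window_count T x s h"
  shows "secant_energy p T x s + (b - a) / 2 \<le> inner_energy p T x s"
proof -
  define g where
    "g h = \<bar>h - of_int (window_count T x s h)\<bar> powr p - secant p h (of_int (window_count T x s h))" for h
  have g_integrable: "g integrable_on {0..real T}"
    unfolding g_def by (intro integrable_diff window_integrand_integrable secant_window_integrable)
  have "1/2 \<le> g h" if "h \<in> {a..b}" for h
  proof -
    have "secant p h (of_int (window_count T x s h)) + 1/2 \<le> \<bar>h - of_int (window_count T x s h)\<bar> powr p"
      using that ab by (intro secant_add_half_le_abs_diff_powr[OF p] two) auto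
    then show ?thesis by (simp add: g_def)
  qed
  then have "1/2 * (b - a) \<le> integral {0..real T} g"
    using ab T secant_le_abs_diff_powr[OF p]
    by (intro integral_ge_on_subinterval g_integrable) (auto simp: g_def)
  also have "integral {0..real T} g = inner_energy p T x s - secant_energy p T x s"
    unfolding g_def secant_energy_eq_integral inner_energy_eq_window_integral
    by (intro integral_diff window_integrand_integrable secant_window_integrable)
  finally show ?thesis by linarith
qed

lemma F0_gt_lower_bound:
  assumes ij: "i < T" "j < T" "i \<noteq> j"
    and close: "x i + of_int ki * real T \<le> x j + of_int kj * real T"
      "x j + of_int kj * real T < x i + of_int ki * real T + 1"
  shows "energy_lower_bound p T < F0 p T x"
proof -
  define y1 where "y1 = x i + of_int ki * real T"
  define y2 where "y2 = x j + of_int kj * real T"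
  define hA where "hA = (max (y2 - y1) (3/4) + 1) / 2"
  define hB where "hB = (hA + 1) / 2"
  define sL where "sL = y2 - hA"
  define sR where "sR = (y2 - hA + y1) / 2"
  \<comment> \<open>For \<open>s \<in> [sL, sR]\<close> and \<open>h \<in> [hA, hB]\<close> both \<open>y1\<close> and \<open>y2\<close> lie in \<open>(s, s + h]\<close>.\<close>
  have h: "3/4 \<le> hA" "hA < hB" "hB < 1" "y2 - y1 < hA" and y: "y1 \<le> y2"
    using close by (auto simp: hA_def hB_def y1_def y2_def max_def)
  have s: "sL < sR" "sR < y1" "sR \<le> sL + real T"
    using h close T by (auto simp: sL_def sR_def y1_def y2_def)
  define G where "G s = inner_energy p T x s - secant_energy p T x s" for s
  have G_integrable: "G integrable_on {a..b}" for a b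
    unfolding G_def by (intro integrable_diff inner_energy_integrable secant_energy_integrable)
  have "(hB - hA) / 2 \<le> G s" if "s \<in> {sL..sR}" for s
  proof -
    have "2 \<le> window_count T x s h" if "h \<in> {hA..hB}" for h
      using \<open>s \<in> {sL..sR}\<close> that h s y T
      by (intro window_count_ge_2[OF T _ _ ij, where ki=ki and kj=kj])
        (auto simp: sL_def y1_def[symmetric] y2_def[symmetric])
    then have "secant_energy p T x s + (hB - hA) / 2 \<le> inner_energy p T x s"
      using h by (intro secant_energy_add_le_inner_energy) auto
    then show ?thesis unfolding G_def by linarith
  qed
  then have "(hB - hA) / 2 * (sR - sL) \<le> integral {sL..sL + real T} G"
    using s secant_energy_le_inner_energy
    by (intro integral_ge_on_subinterval G_integrable) (auto simp: G_def)
  also have "\<dots> = integral {0..real T} G"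
  proof (rule integral_periodic_shift)
    show "G (s + real T) = G s" for s
      unfolding G_def inner_energy_def secant_energy_def u_conf_periodic[OF T] window_count_periodic[OF T] ..
  qed (use T G_integrable in auto)
  also have "\<dots> = F0 p T x - energy_lower_bound p T"
    unfolding G_def F0_eq_integral_inner_energy integral_secant_energy[symmetric, of x]
    by (intro integral_diff inner_energy_integrable secant_energy_integrable)
  finally have "(hB - hA) / 2 * (sR - sL) \<le> F0 p T x - energy_lower_bound p T" .
  moreover have "0 < (hB - hA) / 2 * (sR - sL)" using h s by simp
  ultimately show ?thesis by linarith
qed

end

definition equispaced :: "nat \<Rightarrow> (nat \<Rightarrow> real) \<Rightarrow> bool" where
  "equispaced T x \<longleftrightarrow> (\<forall>i<T. x i = x 0 + real i)"

lemma sum_div_shifts: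
  assumes "T \<ge> 1"
  shows "(\<Sum>i<T. (m - int i) div int T) = m - int T + 1"
proof -
  obtain n where n: "T = Suc n" using assms by (cases T) auto
  define S where "S m = (\<Sum>i<T. (m - int i) div int T)" for m
  have step: "S (m + 1) = S m + 1" for m
  proof -
    have "(m + 1) div int T = (m - int n + 1 * int T) div int T" by (simp add: n)
    also have "\<dots> = (m - int n) div int T + 1" using assms by (subst div_mult_self1) auto
    finally have "(m + 1) div int T = (m - int n) div int T + 1" .
    then show ?thesis unfolding S_def n by (subst sum.lessThan_Suc_shift) (simp add: algebra_simps)
  qed
  have S_base: "S (int T - 1) = 0"
    unfolding S_def by (intro sum.neutral ballI) (auto intro!: div_pos_pos_trivial)
  have "S m = m - int T + 1"
  proof (induction m rule: int_induct[where k="int T - 1"])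
    case base then show ?case using S_base by simp
  next
    case (step1 i) then show ?case using step[of i] by simp
  next
    case (step2 i) then show ?case using step[of "i - 1"] by simp
  qed
  then show ?thesis unfolding S_def .
qed

lemma sum_floor_shifts:
  assumes "T \<ge> 1"
  shows "(\<Sum>i<T. \<lfloor>(y - real i) / real T\<rfloor>) = \<lfloor>y\<rfloor> - int T + 1"
proof -
  have "\<lfloor>(y - real i) / real T\<rfloor> = (\<lfloor>y\<rfloor> - int i) div int T" for i
    using floor_divide_real_eq_div[of "int T" "y - real i"] floor_diff_of_int[of y "int i"] by simp
  then show ?thesis using sum_div_shifts[OF assms] by simp
qed

lemma equispaced_window_count:
  assumes T: "T \<ge> 1" and "equispaced T x"
  shows "window_count T x s h = \<lfloor>h\<rfloor> \<or> window_count T x s h = \<lfloor>h\<rfloor> + 1"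
proof -
  define r where "r = s - x 0"
  have "window_count T x s h = (\<Sum>i<T. \<lfloor>(r + h - real i) / real T\<rfloor> - \<lfloor>(r - real i) / real T\<rfloor>)"
    unfolding window_count_def multiples_count_def
  proof (intro sum.cong refl)
    fix i assume "i \<in> {..<T}"
    then have "x i = x 0 + real i" using assms(2) unfolding equispaced_def by blast
    then show "\<lfloor>(s - x i + h) / real T\<rfloor> - \<lfloor>(s - x i) / real T\<rfloor>
        = \<lfloor>(r + h - real i) / real T\<rfloor> - \<lfloor>(r - real i) / real T\<rfloor>"
      by (simp add: r_def algebra_simps)
  qed
  also have "\<dots> = (\<Sum>i<T. \<lfloor>(r + h - real i) / real T\<rfloor>) - (\<Sum>i<T. \<lfloor>(r - real i) / real T\<rfloor>)"
    by (simp only: sum_subtractf)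
  also have "\<dots> = \<lfloor>r + h\<rfloor> - \<lfloor>r\<rfloor>" unfolding sum_floor_shifts[OF T] by simp
  finally show ?thesis using floor_add[of r h] by (auto split: if_splits)
qed

lemma eq_config_is_config: "is_config T eq_config"
  unfolding is_config_def eq_config_def by auto

lemma equispaced_eq_config: "equispaced T eq_config"
  unfolding equispaced_def eq_config_def by simp

lemma finite_conf_count_set:
  assumes "T \<ge> 1" shows "finite {(i::nat, k::int). i < T \<and> x i + of_int k * real T = y}"
proof (rule finite_subset)
  show "{(i::nat, k::int). i < T \<and> x i + of_int k * real T = y}
    \<subseteq> (\<lambda>i. (i, \<lfloor>(y - x i) / real T\<rfloor>)) ` {..<T}"
  proof
    fix z assume "z \<in> {(i::nat, k::int). i < T \<and> x i + of_int k * real T = y}"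
    then obtain i k where z: "z = (i, k)" "i < T" "x i + of_int k * real T = y" by auto
    then have "(y - x i) / real T = of_int k" using assms by (simp add: field_simps)
    then show "z \<in> (\<lambda>i. (i, \<lfloor>(y - x i) / real T\<rfloor>)) ` {..<T}" using z by auto
  qed
qed simp

lemma conf_count_eq_config_le_1: "conf_count T eq_config z \<le> 1"
proof -
  define E where "E = {(i::nat, k::int). i < T \<and> eq_config i + of_int k * real T = z}"
  have "a = b" if "a \<in> E" "b \<in> E" for a b
  proof -
    obtain i k i' k' where ab: "a = (i, k)" "b = (i', k')" by fastforce
    with that have "i < T" "i' < T" "real i + of_int k * real T = real i' + of_int k' * real T"
      by (auto simp: E_def eq_config_def)
    then have "real_of_int (int i + k * int T) = real_of_int (int i' + k' * int T)" by simp
    then have e: "int i + k * int T = int i' + k' * int T" by (simp only: of_int_eq_iff)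
    have "int i mod int T = (int i + k * int T) mod int T" by simp
    also have "\<dots> = int i' mod int T" unfolding e by simp
    finally have "int i mod int T = int i' mod int T" .
    then have "i = i'" using \<open>i < T\<close> \<open>i' < T\<close> by simp
    then show ?thesis using e ab \<open>i < T\<close> by simp
  qed
  then show ?thesis
    unfolding conf_count_def E_def[symmetric] by (cases "finite E") (auto simp: card_le_Suc0_iff_eq)
qed

lemma unit_gaps_equispaced:
  assumes gaps: "\<And>i. i + 1 < T \<Longrightarrow> 1 \<le> x (i + 1) - x i"
    and width: "x (T - 1) - x 0 \<le> real T - 1"
  shows "equispaced T x"
proof -
  have up: "x i + real k \<le> x (i + k)" if "i + k < T" for i k
    using that
  proof (induction k)
    case (Suc k)
    then show ?case using gaps[of "i + k"] by simp
  qed simp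
  show ?thesis unfolding equispaced_def
  proof clarify
    fix i assume i: "i < T"
    have "x i + real (T - 1 - i) \<le> x (T - 1)" using up[of i "T - 1 - i"] i by simp
    then show "x i = x 0 + real i" using up[of 0 i] i width by (simp add: of_nat_diff)
  qed
qed

lemma equispaced_imp_conf_translate_eq:
  assumes "equispaced T x"
  shows "conf_translate_eq T x eq_config (x 0)"
proof -
  have "x i + of_int k * real T = y \<longleftrightarrow> eq_config i + of_int k * real T = y - x 0" if "i < T" for i k y
  proof -
    have "x i = x 0 + real i" using assms that unfolding equispaced_def by blast
    then show ?thesis by (auto simp: eq_config_def)
  qed
  then show ?thesis unfolding conf_translate_eq_def conf_count_def
    by (intro allI arg_cong[where f=card]) auto
qed

lemma conf_translate_eq_eq_config_points:
  assumes T: "T \<ge> 1" and tr: "conf_translate_eq T x eq_config a" and i: "i < T"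
  shows "x i - a \<in> \<int>" and "j < T \<Longrightarrow> i \<noteq> j \<Longrightarrow> x i \<noteq> x j"
proof -
  define X where "X y = {(i::nat, k::int). i < T \<and> x i + of_int k * real T = y}" for y
  have card_X: "card (X y) = conf_count T eq_config (y - a)" for y
    using tr unfolding conf_translate_eq_def conf_count_def X_def by simp
  have finite_X: "finite (X y)" for y
    unfolding X_def by (rule finite_conf_count_set[OF T])
  have "card (X (x i)) \<noteq> 0" using finite_X[of "x i"] i by (auto simp: X_def)
  then have "{(j, k). j < T \<and> eq_config j + of_int k * real T = x i - a} \<noteq> {}"
    unfolding card_X conf_count_def by (metis card.empty)
  then obtain i' k where "real i' + of_int k * real T = x i - a" by (auto simp: eq_config_def)
  then have "x i - a = of_int (int i' + k * int T)" by simp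
  then show "x i - a \<in> \<int>" by simp
  show "x i \<noteq> x j" if "j < T" "i \<noteq> j"
  proof
    assume "x i = x j"
    then have "{(i, 0), (j, 0)} \<subseteq> X (x i)" using i that by (auto simp: X_def)
    then have "card {(i, 0::int), (j, 0)} \<le> card (X (x i))" by (intro card_mono finite_X)
    then show False using conf_count_eq_config_le_1[of T "x i - a"] card_X[of "x i"] that by simp
  qed
qed

lemma conf_translate_eq_imp_equispaced:
  assumes T: "T \<ge> 1" and cfg: "is_config T x" and tr: "conf_translate_eq T x eq_config a"
  shows "equispaced T x"
proof -
  note points = conf_translate_eq_eq_config_points[OF T tr]
  have diff_Ints: "x j - x i \<in> \<int>" if "i < T" "j < T" for i j
    using Ints_diff[OF points(1)[OF that(2)] points(1)[OF that(1)]] by simp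
  show ?thesis
  proof (rule unit_gaps_equispaced)
    fix i assume i: "i + 1 < T"
    have "x i \<le> x (i + 1)" using cfg i unfolding is_config_def by auto
    moreover have "x (i + 1) \<noteq> x i" using points(2)[of "i + 1" i] i by simp
    ultimately show "1 \<le> x (i + 1) - x i"
      using Ints_nonzero_abs_ge1[OF diff_Ints[of i "i + 1"]] i by simp
  next
    obtain m where m: "x (T - 1) - x 0 = of_int m" using diff_Ints[of 0 "T - 1"] T by (auto elim: Ints_cases)
    have "x (T - 1) < real T" "0 \<le> x 0" using cfg T unfolding is_config_def by auto
    then have "m < int T" using m by linarith
    then show "x (T - 1) - x 0 \<le> real T - 1" using m by linarith
  qed
qed

lemma not_equispaced_close_points:
  assumes T: "T \<ge> 1" and cfg: "is_config T x" and "\<not> equispaced T x"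
  obtains i j ki kj where "i < T" "j < T" "i \<noteq> j"
    "x i + of_int ki * real T \<le> x j + of_int kj * real T"
    "x j + of_int kj * real T < x i + of_int ki * real T + 1"
proof (cases "\<forall>i. i + 1 < T \<longrightarrow> 1 \<le> x (i + 1) - x i")
  case True
  have wrap: "x 0 + real T < x (T - 1) + 1"
  proof (rule ccontr)
    assume "\<not> x 0 + real T < x (T - 1) + 1"
    then have "x (T - 1) - x 0 \<le> real T - 1" by simp
    then show False using unit_gaps_equispaced[of T x] True assms(3) by blast
  qed
  then have "T \<noteq> 1" by auto
  moreover have "x (T - 1) < real T" "0 \<le> x 0" using cfg T unfolding is_config_def by auto
  ultimately show ?thesis using that[of "T - 1" 0 0 1] T wrap by simp
next
  case False
  then obtain i where "i + 1 < T" "x (i + 1) - x i < 1" by auto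
  moreover have "x i \<le> x (i + 1)" using cfg \<open>i + 1 < T\<close> unfolding is_config_def by auto
  ultimately show ?thesis using that[of i "i + 1" 0 0] by simp
qed

lemma conf_translate_eq_eq_config_iff:
  assumes "T \<ge> 1" and "is_config T x"
  shows "(\<exists>a. conf_translate_eq T x eq_config a) \<longleftrightarrow> equispaced T x"
  using equispaced_imp_conf_translate_eq conf_translate_eq_imp_equispaced[OF assms] by blast

lemma F0_eq_lower_bound_iff_equispaced:
  assumes p: "p \<ge> 1" and T: "T \<ge> 1" and cfg: "is_config T x"
  shows "F0 p T x = energy_lower_bound p T \<longleftrightarrow> equispaced T x"
proof
  assume "F0 p T x = energy_lower_bound p T"
  show "equispaced T x"
  proof (rule ccontr)
    assume "\<not> equispaced T x"
    then obtain i j ki kj where "i < T" "j < T" "i \<noteq> j"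
      "x i + of_int ki * real T \<le> x j + of_int kj * real T"
      "x j + of_int kj * real T < x i + of_int ki * real T + 1"
      using not_equispaced_close_points[OF T cfg] by blast
    then have "energy_lower_bound p T < F0 p T x" by (rule F0_gt_lower_bound[OF p T])
    then show False using \<open>F0 p T x = energy_lower_bound p T\<close> by simp
  qed
next
  assume "equispaced T x"
  then show "F0 p T x = energy_lower_bound p T"
    using F0_eq_lower_bound[OF p T] equispaced_window_count[OF T] by blast
qed

theorem mainTheorem13:
  fixes p :: real and T :: nat
  assumes "p \<ge> 1" and "T \<ge> 1"
  shows "is_config T eq_config \<and>
    (\<forall>x. is_config T x \<longrightarrow> F0 p T eq_config \<le> F0 p T x) \<and>
    (\<forall>x. is_config T x \<longrightarrow>
       (F0 p T x = F0 p T eq_config \<longleftrightarrow> (\<exists>a. conf_translate_eq T x eq_config a)))"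
proof -
  have F0_eq_config: "F0 p T eq_config = energy_lower_bound p T"
    using F0_eq_lower_bound_iff_equispaced[OF assms eq_config_is_config] equispaced_eq_config by simp
  show ?thesis
    using eq_config_is_config energy_lower_bound_le_F0[OF assms]
      F0_eq_lower_bound_iff_equispaced[OF assms] conf_translate_eq_eq_config_iff[OF assms(2)]
    unfolding F0_eq_config by simp
qed

end
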